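(* Let $\mathcal{F}=(M,\{A^u\}_{u\in Q})$ be an FDFA and $\underline{B}$ the Büchi automaton constructed from $\mathcal{F}$ as in the context. Let $u\in\Sigma^*$ and $v\in\Sigma^+$. If $(u,v^k)$ is accepted by $\mathcal{F}$ for every $k\geq1$, then $uv^\omega\in UP(L(\underline{B}))$.
   Context: $\Sigma$ is a finite alphabet. For a complete DFA $A$ and finite word $w$, $A(w)$ is the state reached from the initial state on $w$. An FDFA is $\mathcal{F}=(M,\{A^q\}_{q\in Q})$ with $M=(\Sigma,Q,q_0,\delta)$ a complete DFA without accepting states and each $A^q=(\Sigma,Q_q,s_q,F_q,\delta_q)$ a complete DFA. $(u,v)$ is accepted by $\mathcal{F}$ iff $M(uv)=M(u)$ and $v\in L(A^{M(u)})$. For an $\omega$-language $L'$, $UP(L')$ is the set of ultimately periodic words in $L'$. Construction of $\underline{B}$: for a DFA $D$ and states $s,t$, $D^s_t$ is $D$ with initial state $s$ and accepting set $\{t\}$. For $u\in Q$, $v\in F_u$ let $\underline{P}_{(u,v)}=M^u_u\times(A^u)^{s_u}_v\times(A^u)^v_v$ (synchronous product, single accepting state $f_P$, initial state $s_P$, states $Q_P$, transitions $\delta_P$). From it form the Büchi automaton with $\epsilon$-transitions $(\Sigma,Q_P\cup\{f\},s_P,\{f\},\delta_P\cup\{(f,\epsilon,s_P),(f_P,\epsilon,f)\})$ with $f$ fresh. $\underline{B}$ has state set $Q$ plus disjoint copies of these automata for all $u\in Q$, $v\in F_u$; initial state $q_0$; accepting states the fresh states $f$; transitions $\delta$, those of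 the components, and $\epsilon$-transitions from $u\in Q$ to the initial state of the component for $(u,v)$. An infinite word is accepted if some run (with $\epsilon$-moves) reading it visits accepting states infinitely often. *)

theory Defs
  imports Main
begin

definition run :: "('q \<Rightarrow> 'a \<Rightarrow> 'q) \<Rightarrow> 'q \<Rightarrow> 'a list \<Rightarrow> 'q" where
  "run d s w = fold (\<lambda>a q. d q a) w s"

text \<open>An FDFA over alphabet 'a: leading DFA M = (Q = UNIV :: 'q, q0, delta) without accepting
  states, and for every q a complete progress DFA A^q = (UNIV :: 's, s q, F q, dA q).
  Finiteness of alphabet and state sets is imposed via the sort finite in the theorem.\<close>
record ('a, 'q, 's) fdfa =
  m_init :: 'q
  m_delta :: "'q \<Rightarrow> 'a \<Rightarrow> 'q"
  p_init :: "'q \<Rightarrow> 's"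
  p_final :: "'q \<Rightarrow> 's set"
  p_delta :: "'q \<Rightarrow> 's \<Rightarrow> 'a \<Rightarrow> 's"

definition M_of :: "('a, 'q, 's) fdfa \<Rightarrow> 'a list \<Rightarrow> 'q" where
  "M_of F w = run (m_delta F) (m_init F) w"

definition fdfa_accepts :: "('a, 'q, 's) fdfa \<Rightarrow> 'a list \<Rightarrow> 'a list \<Rightarrow> bool" where
  "fdfa_accepts F u v \<longleftrightarrow>
     M_of F (u @ v) = M_of F u \<and>
     run (p_delta F (M_of F u)) (p_init F (M_of F u)) v \<in> p_final F (M_of F u)"

record ('a, 'b) enba =
  b_init :: 'b
  b_trans :: "('b \<times> 'a option \<times> 'b) set"
  b_acc :: "'b set"

text \<open>A run on an infinite word w: states r, labels l (None = epsilon move); the letters read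
  (non-epsilon labels, in order) spell w, infinitely many letters are read, and accepting states
  are visited infinitely often.\<close>
definition enba_accepts :: "('a, 'b) enba \<Rightarrow> (nat \<Rightarrow> 'a) \<Rightarrow> bool" where
  "enba_accepts B w \<longleftrightarrow>
     (\<exists>r l. r 0 = b_init B \<and>
        (\<forall>i. (r i, l i, r (Suc i)) \<in> b_trans B) \<and>
        (\<forall>i. l i \<noteq> None \<longrightarrow> l i = Some (w (card {j. j < i \<and> l j \<noteq> None}))) \<and>
        infinite {i. l i \<noteq> None} \<and>
        infinite {i. r i \<in> b_acc B})"

definition enba_lang :: "('a, 'b) enba \<Rightarrow> (nat \<Rightarrow> 'a) set" where
  "enba_lang B = {w. enba_accepts B w}"

text \<open>The ultimately periodic word u v^omega (for v nonempty).\<close>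
definition upw :: "'a list \<Rightarrow> 'a list \<Rightarrow> nat \<Rightarrow> 'a" where
  "upw u v i = (if i < length u then u ! i else v ! ((i - length u) mod length v))"

definition UP :: "(nat \<Rightarrow> 'a) set \<Rightarrow> (nat \<Rightarrow> 'a) set" where
  "UP L = {w \<in> L. \<exists>u v. v \<noteq> [] \<and> w = upw u v}"

text \<open>States: Inl q for q in Q; Inr (u, v, Some p) for the product state p of the component
  for (u,v); Inr (u, v, None) for the fresh state f of that component. The product P_(u,v) = M^u_u x (A^u)^(s_u)_v x (A^u)^v_v has initial state
  (u, s_u, v) and single accepting state f_P = (u, v, v).\<close>
type_synonym ('q, 's) bstate = "'q + ('q \<times> 's \<times> ('q \<times> 's \<times> 's) option)"

definition B_of :: "('a, 'q, 's) fdfa \<Rightarrow> ('a, ('q, 's) bstate) enba" where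
  "B_of F = \<lparr> b_init = Inl (m_init F),
     b_trans =
       {(Inl q, Some a, Inl (m_delta F q a)) | q a. True}
     \<union> {(Inl u, None, Inr (u, v, Some (u, p_init F u, v))) | u v. v \<in> p_final F u}
     \<union> {(Inr (u, v, Some (p1, p2, p3)), Some a,
          Inr (u, v, Some (m_delta F p1 a, p_delta F u p2 a, p_delta F u p3 a)))
         | u v p1 p2 p3 a. v \<in> p_final F u}
     \<union> {(Inr (u, v, Some (u, v, v)), None, Inr (u, v, None)) | u v. v \<in> p_final F u}
     \<union> {(Inr (u, v, None), None, Inr (u, v, Some (u, p_init F u, v))) | u v. v \<in> p_final F u},
     b_acc = {Inr (u, v, None) | u v. v \<in> p_final F u} \<rparr>"

end

theory Submission
  imports Defs "HOL-Library.Infinite_Set"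
begin

text \<open>Let \<open>q = M(u)\<close>. The states of \<open>A\<^sup>q\<close> reached from \<open>s\<^sub>q\<close> on \<open>v, v\<^sup>2, v\<^sup>3, \<dots>\<close> are eventually
  periodic, so for a suitable \<open>k \<ge> 1\<close> the state \<open>t\<close> reached on \<open>v\<^sup>k\<close> satisfies \<open>t\<cdot>v\<^sup>k = t\<close>.
  Acceptance of \<open>(u, v\<^sup>k)\<close> makes \<open>t\<close> accepting and \<open>v\<^sup>k\<close> a loop of \<open>M\<close> at \<open>q\<close>, so the component
  for \<open>(q, t)\<close> reads \<open>v\<^sup>k\<close> from \<open>(q, s\<^sub>q, t)\<close> to \<open>f\<^sub>P = (q, t, t)\<close> and returns through \<open>f\<close>
  to its initial state. This lasso accepts \<open>u (v\<^sup>k)\<^sup>\<omega> = u v\<^sup>\<omega>\<close>.\<close>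

lemma nth_concat_replicate:
  "j < k * length v \<Longrightarrow> concat (replicate k v) ! j = v ! (j mod length v)"
proof (induction k arbitrary: j)
  case (Suc k)
  show ?case
  proof (cases "j < length v")
    case False
    then have "concat (replicate (Suc k) v) ! j = concat (replicate k v) ! (j - length v)"
      by (simp add: nth_append)
    also have "\<dots> = v ! (j mod length v)"
      using Suc False by (simp add: le_mod_geq)
    finally show ?thesis .
  qed (simp add: nth_append)
qed simp

lemma upw_eq_nth_concat_replicate:
  "i < length xs + n * length ys \<Longrightarrow> upw xs ys i = (xs @ concat (replicate n ys)) ! i"
  by (auto simp: upw_def nth_append nth_concat_replicate mult.commute[of n] less_diff_conv2
           intro: mod_less)

lemma upw_concat_replicate:
  assumes "k > 0"
  shows "upw u (concat (replicate k v)) = upw u v"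
proof
  fix i
  have "(i - length u) mod (k * length v) mod length v = (i - length u) mod length v"
    by (simp add: mod_mod_cancel)
  moreover have "(i - length u) mod (k * length v) < k * length v" if "v \<noteq> []"
    using that assms by simp
  ultimately show "upw u (concat (replicate k v)) i = upw u v i"
    by (cases "v = []") (simp_all add: upw_def length_concat sum_list_replicate nth_concat_replicate)
qed

lemma infinite_upw_indices:
  assumes "y \<in> set ys" "P y"
  shows "infinite {i. P (upw xs ys i)}"
  unfolding infinite_nat_iff_unbounded_le
proof
  fix c
  obtain j where j: "j < length ys" "ys ! j = y"
    using assms(1) by (auto simp: in_set_conv_nth)
  have "c * 1 \<le> c * length ys"
    using j by (intro mult_le_mono2) simp
  then have "c \<le> length xs + c * length ys + j"
    by linarith
  moreover have "upw xs ys (length xs + c * length ys + j) = y"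
    using j by (simp add: upw_def)
  ultimately show "\<exists>n\<ge>c. n \<in> {i. P (upw xs ys i)}"
    using assms(2) by auto
qed

lemma funpow_idempotent_power:
  fixes f :: "'a \<Rightarrow> 'a"
  assumes "finite (range (\<lambda>n. (f ^^ n) x))"
  obtains k where "k > 0" "(f ^^ k) ((f ^^ k) x) = (f ^^ k) x"
proof -
  have "\<not> inj (\<lambda>n. (f ^^ n) x)"
    using assms finite_imageD by auto
  then obtain a b where "a < b" "(f ^^ a) x = (f ^^ b) x"
    unfolding inj_def by (metis linorder_neqE_nat)
  then obtain p where p: "p > 0" "(f ^^ (p + a)) x = (f ^^ a) x"
    by (metis add.commute less_imp_add_positive)
  have cycle: "(f ^^ (p * N + c)) x = (f ^^ c) x" if "a \<le> c" for c N
  proof (induction N)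
    case (Suc N)
    obtain d where c: "c = d + a"
      using \<open>a \<le> c\<close> le_iff_add by (metis add.commute)
    have "(f ^^ (p * Suc N + c)) x = (f ^^ (p * N + d)) ((f ^^ (p + a)) x)"
      using funpow_add[of "p * N + d" "p + a" f] by (simp add: c algebra_simps)
    also have "\<dots> = (f ^^ (p * N + d)) ((f ^^ a) x)"
      by (simp only: p(2))
    also have "\<dots> = (f ^^ (p * N + c)) x"
      using funpow_add[of "p * N + d" a f] by (simp add: c algebra_simps)
    finally show ?case using Suc.IH by simp
  qed simp
  show ?thesis
  proof
    show "p * Suc a > 0" using p(1) by simp
    have "a \<le> p * Suc a" using p(1) by (cases p) auto
    then show "(f ^^ (p * Suc a)) ((f ^^ (p * Suc a)) x) = (f ^^ (p * Suc a)) x"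
      using cycle[of "p * Suc a" "Suc a"] funpow_add[of "p * Suc a" "p * Suc a" f] by simp
  qed
qed

fun path :: "('b \<times> 'c \<times> 'b) set \<Rightarrow> 'b \<Rightarrow> ('b \<times> 'c \<times> 'b) list \<Rightarrow> 'b \<Rightarrow> bool" where
  "path T p [] q \<longleftrightarrow> p = q"
| "path T p (t # ts) q \<longleftrightarrow> t \<in> T \<and> fst t = p \<and> path T (snd (snd t)) ts q"

lemma path_append:
  "path T p (xs @ ys) q \<longleftrightarrow> (\<exists>x. path T p xs x \<and> path T x ys q)"
  by (induction xs arbitrary: p) auto

lemma path_concat_replicate:
  "path T x ys x \<Longrightarrow> path T x (concat (replicate n ys)) x"
  by (induction n) (auto simp: path_append)

lemma path_nth:
  assumes "path T p ts q" "i < length ts"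
  shows "ts ! i \<in> T"
    and "fst (ts ! i) = (if i = 0 then p else snd (snd (ts ! (i - 1))))"
  using assms by (induction ts arbitrary: p i) (auto simp: nth_Cons split: nat.split)

definition letters :: "('b \<times> 'a option \<times> 'b) list \<Rightarrow> 'a list" where
  "letters ts = map (\<lambda>t. the (fst (snd t))) (filter (\<lambda>t. fst (snd t) \<noteq> None) ts)"

lemma letters_Nil [simp]: "letters [] = []"
  by (simp add: letters_def)

lemma letters_append [simp]: "letters (xs @ ys) = letters xs @ letters ys"
  by (simp add: letters_def)

lemma letters_concat_replicate [simp]:
  "letters (concat (replicate n ys)) = concat (replicate n (letters ys))"
  by (induction n) (simp_all add: letters_def)

lemma letters_Cons_None [simp]: "letters ((x, None, y) # ts) = letters ts"
  by (simp add: letters_def)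

lemma nth_filter_length_filter_take:
  assumes "i < length xs" "P (xs ! i)"
  shows "length (filter P (take i xs)) < length (filter P xs)"
    and "filter P xs ! length (filter P (take i xs)) = xs ! i"
proof -
  have "filter P xs = filter P (take i xs) @ xs ! i # filter P (drop (Suc i) xs)"
    using assms by (subst id_take_nth_drop[OF assms(1)]) simp
  then show "length (filter P (take i xs)) < length (filter P xs)"
    and "filter P xs ! length (filter P (take i xs)) = xs ! i"
    by simp_all
qed

lemma nth_letters:
  assumes "i < length ts" "fst (snd (ts ! i)) = Some a"
  shows "length (letters (take i ts)) < length (letters ts)"
    and "letters ts ! length (letters (take i ts)) = a"
  using nth_filter_length_filter_take[of i ts "\<lambda>t. fst (snd t) \<noteq> None"] assms
  by (simp_all add: letters_def)

lemma length_letters_take: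
  "i \<le> length ts \<Longrightarrow> length (letters (take i ts)) = card {j. j < i \<and> fst (snd (ts ! j)) \<noteq> None}"
  by (auto simp: letters_def length_filter_conv_card min_absorb2 intro!: arg_cong[where f = card])

text \<open>The run is the ultimately periodic sequence of transitions; every question about a finite
  stretch of it is answered inside a finite unrolling of the lasso.\<close>

lemma enba_accepts_lasso:
  assumes prefix: "path (b_trans B) (b_init B) ps x"
    and cycle: "path (b_trans B) x cs x"
    and "letters cs \<noteq> []"
    and "tacc \<in> set cs" "fst tacc \<in> b_acc B"
  shows "enba_accepts B (upw (letters ps) (letters cs))"
proof -
  define \<sigma> where "\<sigma> = upw ps cs"
  define unroll where "unroll n = ps @ concat (replicate n cs)" for n
  have cs: "cs \<noteq> []"
    using assms(3) by (auto simp: letters_def)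
  have unroll_path: "path (b_trans B) (b_init B) (unroll n) x" for n
    using prefix path_concat_replicate[OF cycle] by (auto simp: unroll_def path_append)
  have length_unroll: "i < length (unroll (Suc i))" for i
    using cs by (cases cs) (auto simp: unroll_def length_concat sum_list_replicate)
  have \<sigma>_unroll: "\<sigma> j = unroll n ! j" if "j < length (unroll n)" for j n
    using that by (simp add: \<sigma>_def unroll_def upw_eq_nth_concat_replicate length_concat sum_list_replicate)
  define r where "r i = fst (\<sigma> i)" for i
  define l where "l i = fst (snd (\<sigma> i))" for i
  have "r 0 = b_init B"
    using path_nth(2)[OF unroll_path length_unroll[of 0]] \<sigma>_unroll[OF length_unroll] by (simp add: r_def)
  moreover have "(r i, l i, r (Suc i)) \<in> b_trans B" for i
  proof -
    let ?zs = "unroll (Suc (Suc i))"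
    have "Suc i < length ?zs" using length_unroll .
    then have "\<sigma> i = ?zs ! i" "\<sigma> (Suc i) = ?zs ! Suc i"
      and "?zs ! i \<in> b_trans B" "fst (?zs ! Suc i) = snd (snd (?zs ! i))"
      using \<sigma>_unroll path_nth[OF unroll_path] by auto
    then show ?thesis by (simp add: r_def l_def)
  qed
  moreover have "l i = Some (upw (letters ps) (letters cs) (card {j. j < i \<and> l j \<noteq> None}))"
    if "l i = Some a" for i a
  proof -
    let ?zs = "unroll (Suc i)"
    have i: "i < length ?zs" using length_unroll .
    have "\<sigma> j = ?zs ! j" if "j < i" for j
      using that i \<sigma>_unroll by simp
    then have count: "card {j. j < i \<and> l j \<noteq> None} = length (letters (take i ?zs))"
      using i by (simp add: length_letters_take l_def cong: conj_cong)
    define c where "c = length (letters (take i ?zs))"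
    have "fst (snd (?zs ! i)) = Some a"
      using that \<sigma>_unroll[OF i] by (simp add: l_def)
    then have "c < length (letters ?zs)" "letters ?zs ! c = a"
      using nth_letters[OF i] by (simp_all add: c_def)
    moreover have "letters ?zs = letters ps @ concat (replicate (Suc i) (letters cs))"
      by (simp add: unroll_def)
    ultimately have "upw (letters ps) (letters cs) c = a"
      using upw_eq_nth_concat_replicate[of c "letters ps" "Suc i" "letters cs"]
      by (simp add: length_concat sum_list_replicate)
    then show ?thesis
      using that count by (simp add: c_def)
  qed
  moreover obtain t a where "t \<in> set cs" "fst (snd t) = Some a"
    using assms(3) by (force simp: letters_def filter_empty_conv)
  then have "infinite {i. l i \<noteq> None}"
    unfolding l_def \<sigma>_def by (intro infinite_upw_indices) auto
  moreover have "infinite {i. r i \<in> b_acc B}"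
    unfolding r_def \<sigma>_def using assms(4,5) by (rule infinite_upw_indices)
  ultimately show ?thesis
    unfolding enba_accepts_def by blast
qed

primrec trace :: "('q \<Rightarrow> 'b) \<Rightarrow> ('q \<Rightarrow> 'a \<Rightarrow> 'q) \<Rightarrow> 'q \<Rightarrow> 'a list \<Rightarrow> ('b \<times> 'a option \<times> 'b) list" where
  "trace f d s [] = []"
| "trace f d s (a # w) = (f s, Some a, f (d s a)) # trace f d (d s a) w"

lemma letters_trace [simp]: "letters (trace f d s w) = w"
  by (induction w arbitrary: s) (simp_all add: letters_def)

lemma path_trace:
  assumes "\<And>q a. (f q, Some a, f (d q a)) \<in> T"
  shows "path T (f s) (trace f d s w) (f (run d s w))"
  using assms by (induction w arbitrary: s) (simp_all add: run_def)

lemma run_concat_replicate: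
  "run d s (concat (replicate k v)) = ((\<lambda>x. run d x v) ^^ k) s"
  by (induction k arbitrary: s) (simp_all add: run_def funpow_swap1)

definition component_delta ::
    "('a, 'q, 's) fdfa \<Rightarrow> 'q \<Rightarrow> 'q \<times> 's \<times> 's \<Rightarrow> 'a \<Rightarrow> 'q \<times> 's \<times> 's" where
  "component_delta F u = (\<lambda>(p1, p2, p3) a. (m_delta F p1 a, p_delta F u p2 a, p_delta F u p3 a))"

lemma run_component_delta:
  "run (component_delta F u) (p1, p2, p3) w =
     (run (m_delta F) p1 w, run (p_delta F u) p2 w, run (p_delta F u) p3 w)"
  by (induction w arbitrary: p1 p2 p3) (simp_all add: run_def component_delta_def)

lemma leading_path:
  "path (b_trans (B_of F)) (b_init (B_of F)) (trace Inl (m_delta F) (m_init F) u) (Inl (M_of F u))"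
  using path_trace[of Inl "m_delta F" "b_trans (B_of F)" "m_init F" u] by (simp add: B_of_def M_of_def)

lemma component_cycle:
  fixes F :: "('a, 'q, 's) fdfa"
  assumes "v \<in> p_final F u"
    and "run (m_delta F) u w = u"
    and "run (p_delta F u) (p_init F u) w = v"
    and "run (p_delta F u) v w = v"
  defines "start \<equiv> Inr (u, v, Some (u, p_init F u, v))"
  obtains cs where "path (b_trans (B_of F)) start cs start" "letters cs = w"
    and "(Inr (u, v, None), None, start) \<in> set cs"
proof
  let ?state = "\<lambda>p. Inr (u, v, Some p) :: ('q, 's) bstate"
  let ?cs = "trace ?state (component_delta F u) (u, p_init F u, v) w
    @ [(?state (u, v, v), None, Inr (u, v, None)), (Inr (u, v, None), None, start)]"
  have "(?state p, Some a, ?state (component_delta F u p a)) \<in> b_trans (B_of F)" for p a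
    using assms(1) by (cases p) (auto simp: B_of_def component_delta_def)
  moreover have "run (component_delta F u) (u, p_init F u, v) w = (u, v, v)"
    using assms(2-4) by (simp add: run_component_delta)
  ultimately have "path (b_trans (B_of F)) start
      (trace ?state (component_delta F u) (u, p_init F u, v) w) (?state (u, v, v))"
    using path_trace[of ?state "component_delta F u" "b_trans (B_of F)"] by (metis start_def)
  then show "path (b_trans (B_of F)) start ?cs start"
    using assms(1) by (simp add: path_append B_of_def start_def)
qed (simp_all add: start_def)

theorem lemma4:
  fixes F :: "('a::finite, 'q::finite, 's::finite) fdfa"
    and u v :: "'a list"
  assumes "v \<noteq> []"
    and "\<forall>k\<ge>1. fdfa_accepts F u (concat (replicate k v))"
  shows "upw u v \<in> UP (enba_lang (B_of F))"
proof -
  define q where "q = M_of F u"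
  define h where "h = (\<lambda>s. run (p_delta F q) s v)"
  obtain k where "k > 0" and idem: "(h ^^ k) ((h ^^ k) (p_init F q)) = (h ^^ k) (p_init F q)"
    using funpow_idempotent_power[of h "p_init F q"] by auto
  define w where "w = concat (replicate k v)"
  define t where "t = run (p_delta F q) (p_init F q) w"
  let ?start = "Inr (q, t, Some (q, p_init F q, t))"
  let ?ps = "trace Inl (m_delta F) (m_init F) u @ [(Inl q, None, ?start)]"
  have "fdfa_accepts F u w"
    using assms(2) \<open>k > 0\<close> by (simp add: w_def)
  then have "t \<in> p_final F q" and "run (m_delta F) q w = q"
    by (simp_all add: fdfa_accepts_def t_def q_def M_of_def run_def)
  moreover have "run (p_delta F q) t w = t"
    using idem by (simp add: t_def w_def run_concat_replicate h_def)
  ultimately obtain cs where cycle: "path (b_trans (B_of F)) ?start cs ?start"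
    and "letters cs = w" and "(Inr (q, t, None), None, ?start) \<in> set cs"
    using component_cycle[of t F q w] t_def by blast
  moreover have prefix: "path (b_trans (B_of F)) (b_init (B_of F)) ?ps ?start"
    using leading_path \<open>t \<in> p_final F q\<close> by (auto simp: path_append B_of_def q_def)
  moreover have "w \<noteq> []"
    using assms(1) \<open>k > 0\<close> by (simp add: w_def)
  moreover have "fst (Inr (q, t, None), None, ?start) \<in> b_acc (B_of F)"
    using \<open>t \<in> p_final F q\<close> by (simp add: B_of_def)
  ultimately have "enba_accepts (B_of F) (upw (letters ?ps) w)"
    using enba_accepts_lasso[OF prefix cycle] by metis
  then have "enba_accepts (B_of F) (upw u v)"
    by (simp add: w_def upw_concat_replicate[OF \<open>k > 0\<close>])
  then show ?thesis
    using assms(1) by (auto simp: UP_def enba_lang_def)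
qed

end
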